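(* Consider any correct node-based data structure for the 2D $(+,\min)$ update-query problem over an $N\times M$ matrix, as described in the context, in which $S_U,S_C,S_Q$ are fixed functions of the submatrix. Then some update or some query must visit at least $\frac{NM}{N+M}$ nodes; more precisely, there is a submatrix $B$ such that $|S_U(B)|+|S_C(B)|\ge\frac{NM}{N+M}$ or $|S_Q(B)|\ge\frac{NM}{N+M}$.
   Context: Coordinates $G=\{0,\dots,N-1\}\times\{0,\dots,M-1\}$; a submatrix $[x_0,x_1][y_0,y_1]$ is the set of $(x,y)$ with $x_0\le x\le x_1$, $y_0\le y\le y_1$. The 2D $(+,\min)$ update-query problem: after initialization with a real matrix $A$, an update $U(B,v)$ adds $v$ to every $A[x][y]$ with $(x,y)\in B$, and a query $Q(B)$ must return $\min_{(x,y)\in B}A[x][y]$ of the current matrix. A node-based data structure uses a family $\mathcal{N}$ of pairwise distinct nonempty subsets of $G$ (nodes) containing every singleton $\{(x,y)\}$. Each node $n$ stores a value $n_V$ and a lazy value $n_Z$; at initialization $n_V=\min_{(x,y)\in n}A[x][y]$ and $n_Z=0$. The structure is specified by fixed functions assigning to each submatrix $B$ sets $S_U(B),S_C(B),S_Q(B)\subseteq\mathcal{N}$ with $\bigcup_{n\in S_U(B)}n=B$ and $\bigcup_{n\in S_Q(B)}n=B$. The update $U(B,v)$ sets $n_Z\gets n_Z+v$ for every $n\in S_U(B)$ and may change $m_V$ (in any way) for every $m\in S_C(B)$; no other stored values change; it visits the nodes of $S_U(B)$ and $S_C(B)$. The query $Q(B)$ returns $\min_{n\in S_Q(B)}\big(n_V+\sum_{m\in\mathcal{N},\,m\supseteq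 n}m_Z\big)$ and visits the nodes of $S_Q(B)$. The structure is correct if, for every initial matrix and every sequence of updates and queries, every query returns the correct answer. *)

theory Defs
  imports Complex_Main
begin

type_synonym cell = "nat \<times> nat"
type_synonym node = "cell set"
type_synonym matrix = "cell \<Rightarrow> real"

definition grid :: "nat \<Rightarrow> nat \<Rightarrow> cell set" where
  "grid N M = {0..<N} \<times> {0..<M}"

definition submatrix :: "nat \<Rightarrow> nat \<Rightarrow> nat \<Rightarrow> nat \<Rightarrow> cell set" where
  "submatrix x0 x1 y0 y1 = {x0..x1} \<times> {y0..y1}"

definition submatrices :: "nat \<Rightarrow> nat \<Rightarrow> cell set set" where
  "submatrices N M = {submatrix x0 x1 y0 y1 | x0 x1 y0 y1.
      x0 \<le> x1 \<and> x1 < N \<and> y0 \<le> y1 \<and> y1 < M}"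

text \<open>A node-based data structure: the node family, the fixed functions S_U, S_C, S_Q
  (indexed by the submatrix, as a set of cells), and the (arbitrary, deterministic) rule
  by which an update U(B,v) sets the values m_V of the nodes m in S_C(B).\<close>
record ds =
  nodes :: "node set"
  SU :: "cell set \<Rightarrow> node set"
  SC :: "cell set \<Rightarrow> node set"
  SQ :: "cell set \<Rightarrow> node set"
  chg :: "matrix \<Rightarrow> (node \<Rightarrow> real) \<Rightarrow> (node \<Rightarrow> real) \<Rightarrow> cell set \<Rightarrow> real \<Rightarrow> node \<Rightarrow> real"

definition node_based_ds :: "nat \<Rightarrow> nat \<Rightarrow> ds \<Rightarrow> bool" where
  "node_based_ds N M D \<longleftrightarrow>
     (\<forall>n\<in>nodes D. n \<noteq> {} \<and> n \<subseteq> grid N M) \<and>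
     (\<forall>p\<in>grid N M. {p} \<in> nodes D) \<and>
     (\<forall>B\<in>submatrices N M.
        SU D B \<subseteq> nodes D \<and> SC D B \<subseteq> nodes D \<and> SQ D B \<subseteq> nodes D \<and>
        \<Union>(SU D B) = B \<and> \<Union>(SQ D B) = B)"

datatype operation = Upd "cell set" real | Qry "cell set"

fun op_set :: "operation \<Rightarrow> cell set" where
  "op_set (Upd B v) = B"
| "op_set (Qry B) = B"

text \<open>State: (current matrix A, stored values V, lazy values Z).\<close>
type_synonym state = "matrix \<times> (node \<Rightarrow> real) \<times> (node \<Rightarrow> real)"

definition init_state :: "matrix \<Rightarrow> state" where
  "init_state A = (A, (\<lambda>n. Min (A ` n)), (\<lambda>n. 0))"

definition upd_step :: "ds \<Rightarrow> state \<Rightarrow> cell set \<Rightarrow> real \<Rightarrow> state" where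
  "upd_step D s B v = (case s of (A, V, Z) \<Rightarrow>
     ((\<lambda>p. if p \<in> B then A p + v else A p),
      (\<lambda>m. if m \<in> SC D B then chg D A V Z B v m else V m),
      (\<lambda>n. if n \<in> SU D B then Z n + v else Z n)))"

definition query_val :: "ds \<Rightarrow> state \<Rightarrow> cell set \<Rightarrow> real" where
  "query_val D s B = (case s of (A, V, Z) \<Rightarrow>
     Min ((\<lambda>n. V n + (\<Sum>m\<in>{m\<in>nodes D. n \<subseteq> m}. Z m)) ` SQ D B))"

fun all_correct :: "ds \<Rightarrow> state \<Rightarrow> operation list \<Rightarrow> bool" where
  "all_correct D s [] = True"
| "all_correct D s (Qry B # ops) =
     (query_val D s B = Min (fst s ` B) \<and> all_correct D s ops)"
| "all_correct D s (Upd B v # ops) = all_correct D (upd_step D s B v) ops"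

definition correct_ds :: "nat \<Rightarrow> nat \<Rightarrow> ds \<Rightarrow> bool" where
  "correct_ds N M D \<longleftrightarrow>
     (\<forall>A ops. (\<forall>op\<in>set ops. op_set op \<in> submatrices N M) \<longrightarrow>
        all_correct D (init_state A) ops)"

end

theory Submission
  imports Defs "HOL-Library.Disjoint_Sets"
begin

(* Let R_r be the r-th row and C_c the c-th column of the grid. Updating R_r by -1 on the zero
   matrix and then querying C_c changes only the minimum at (r, c), so the query must use either
   the singleton node {(r, c)} or a node of S_C(R_r). The nodes of S_Q(C_c) for different c are
   disjoint, so charging each cell to S_Q(C_c) or to S_C(R_r) gives
   N M <= sum_r |S_C(R_r)| + sum_c |S_Q(C_c)|, a sum of N + M terms, one of which is therefore
   at least N M / (N + M). *)

definition grid_row :: "nat \<Rightarrow> nat \<Rightarrow> cell set" where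
  "grid_row M r = submatrix r r 0 (M - 1)"

definition grid_column :: "nat \<Rightarrow> nat \<Rightarrow> cell set" where
  "grid_column N c = submatrix 0 (N - 1) c c"

lemma submatrix_in_submatrices:
  "x0 \<le> x1 \<Longrightarrow> x1 < N \<Longrightarrow> y0 \<le> y1 \<Longrightarrow> y1 < M \<Longrightarrow> submatrix x0 x1 y0 y1 \<in> submatrices N M"
  unfolding submatrices_def by blast

lemma finite_submatrices: "B \<in> submatrices N M \<Longrightarrow> finite B"
  unfolding submatrices_def submatrix_def by auto

lemma grid_row_in_submatrices: "r < N \<Longrightarrow> 0 < M \<Longrightarrow> grid_row M r \<in> submatrices N M"
  unfolding grid_row_def by (rule submatrix_in_submatrices) auto

lemma grid_column_in_submatrices: "c < M \<Longrightarrow> 0 < N \<Longrightarrow> grid_column N c \<in> submatrices N M"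
  unfolding grid_column_def by (rule submatrix_in_submatrices) auto

lemma grid_row_Int_grid_column:
  "r < N \<Longrightarrow> c < M \<Longrightarrow> grid_row M r \<inter> grid_column N c = {(r, c)}"
  unfolding grid_row_def grid_column_def submatrix_def by auto

lemma disjoint_family_grid_column: "disjoint_family (grid_column N)"
  unfolding disjoint_family_on_def grid_column_def submatrix_def by auto

lemma card_le_if_disjoint_family_meets:
  assumes "finite T" and "disjoint_family_on F I"
    and meets: "\<And>i. i \<in> I \<Longrightarrow> F i \<inter> T \<noteq> {}"
  shows "card I \<le> card T"
proof -
  define f where "f i = (SOME t. t \<in> F i \<inter> T)" for i
  have f: "f i \<in> F i \<inter> T" if "i \<in> I" for i
    using meets[OF that] unfolding f_def by (metis some_in_eq)
  have "inj_on f I"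
    using f \<open>disjoint_family_on F I\<close> by (fastforce simp: inj_on_def disjoint_family_on_def)
  moreover have "f ` I \<subseteq> T"
    using f by blast
  ultimately show ?thesis
    using \<open>finite T\<close> by (rule card_inj_on_le)
qed

lemma card_grid_split:
  fixes P :: "nat \<Rightarrow> nat \<Rightarrow> bool"
  shows "N * M = (\<Sum>r<N. card {c. c < M \<and> \<not> P r c}) + (\<Sum>c<M. card {r. r < N \<and> P r c})"
proof -
  have card_eq: "card {x. x < K \<and> Q x} = (\<Sum>x<K. of_bool (Q x))" for K and Q :: "nat \<Rightarrow> bool"
    by (simp add: sum_of_bool_eq Int_def conj_commute)
  have "of_bool (\<not> Q) + of_bool Q = (1 :: nat)" for Q
    by simp
  then have "N * M = (\<Sum>r<N. \<Sum>c<M. of_bool (\<not> P r c) + of_bool (P r c))"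
    by simp
  also have "\<dots> = (\<Sum>r<N. \<Sum>c<M. of_bool (\<not> P r c)) + (\<Sum>r<N. \<Sum>c<M. of_bool (P r c))"
    by (simp only: sum.distrib)
  also have "\<dots> = (\<Sum>r<N. \<Sum>c<M. of_bool (\<not> P r c)) + (\<Sum>c<M. \<Sum>r<N. of_bool (P r c))"
    by (subst (2) sum.swap) (rule refl)
  finally show ?thesis
    by (simp only: card_eq)
qed

lemma exists_ge_average_of_two_sums:
  fixes a b :: "nat \<Rightarrow> nat"
  assumes "0 < N + M" and total: "N * M \<le> sum a {..<N} + sum b {..<M}"
  shows "(\<exists>r<N. real N * real M / (real N + real M) \<le> real (a r))
       \<or> (\<exists>c<M. real N * real M / (real N + real M) \<le> real (b c))"
proof (rule ccontr)
  define k where "k = real N * real M / (real N + real M)"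
  assume "\<not> ?thesis"
  then have a: "\<And>r. r < N \<Longrightarrow> real (a r) < k" and b: "\<And>c. c < M \<Longrightarrow> real (b c) < k"
    unfolding k_def by auto
  have "real N * real M \<le> (\<Sum>r<N. real (a r)) + (\<Sum>c<M. real (b c))"
    using total by (metis of_nat_add of_nat_le_iff of_nat_mult of_nat_sum)
  also have "\<dots> < real N * k + real M * k"
  proof (cases "N = 0")
    case True
    then show ?thesis
      using \<open>0 < N + M\<close> b sum_bounded_above_strict[of "{..<M}" "\<lambda>c. real (b c)" k] by simp
  next
    case False
    then show ?thesis
      using a b sum_bounded_above_strict[of "{..<N}" "\<lambda>r. real (a r)" k]
        sum_bounded_above[of "{..<M}" "\<lambda>c. real (b c)" k] by (simp add: less_imp_le)
  qed
  also have "\<dots> = k * (real N + real M)"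
    by (simp add: algebra_simps)
  also have "\<dots> = real N * real M"
    using \<open>0 < N + M\<close> by (simp add: k_def)
  finally show False
    by simp
qed

lemma node_based_ds_finite_nodes: "node_based_ds N M D \<Longrightarrow> finite (nodes D)"
  unfolding node_based_ds_def grid_def
  by (metis Pow_iff finite_Pow_iff finite_SigmaI finite_atLeastLessThan finite_subset subsetI)

lemma
  assumes "node_based_ds N M D" and "B \<in> submatrices N M"
  shows node_based_ds_SQ: "n \<in> SQ D B \<Longrightarrow> n \<in> nodes D \<and> n \<noteq> {} \<and> n \<subseteq> B"
    and node_based_ds_SU_subset: "n \<in> SU D B \<Longrightarrow> n \<subseteq> B"
    and node_based_ds_finite_SC: "finite (SC D B)"
    and node_based_ds_finite_SQ: "finite (SQ D B)"
proof -
  have "SC D B \<subseteq> nodes D" "SQ D B \<subseteq> nodes D" "\<forall>n\<in>nodes D. n \<noteq> {}" "\<Union>(SQ D B) = B"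
    "\<Union>(SU D B) = B"
    using assms unfolding node_based_ds_def by auto
  with node_based_ds_finite_nodes[OF assms(1)]
  show "n \<in> SQ D B \<Longrightarrow> n \<in> nodes D \<and> n \<noteq> {} \<and> n \<subseteq> B" "n \<in> SU D B \<Longrightarrow> n \<subseteq> B"
    "finite (SC D B)" "finite (SQ D B)"
    by (auto intro: finite_subset)
qed

text \<open>Adversary: update \<open>B\<close> by \<open>-1\<close> on the zero matrix, then query \<open>Q\<close>. A query node other
  than \<open>{p}\<close> is not contained in \<open>B \<inter> Q\<close>, so no node of \<open>S_U(B)\<close> contains it; unless it was
  rewritten via \<open>S_C(B)\<close>, it still reports \<open>0\<close> instead of \<open>-1\<close>.\<close>
lemma correct_ds_query_meets_update:
  assumes nb: "node_based_ds N M D" and "correct_ds N M D"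
    and B: "B \<in> submatrices N M" and Q: "Q \<in> submatrices N M" and BQ: "B \<inter> Q = {p}"
  shows "{p} \<in> SQ D Q \<or> SQ D Q \<inter> SC D B \<noteq> {}"
proof (rule ccontr)
  assume "\<not> ?thesis"
  then have no_singleton: "{p} \<notin> SQ D Q" and no_change: "SQ D Q \<inter> SC D B = {}"
    by auto
  obtain A V Z where s: "upd_step D (init_state (\<lambda>_. 0)) B (-1) = (A, V, Z)"
    by (metis prod_cases3)
  have "\<forall>op\<in>set [Upd B (-1), Qry Q]. op_set op \<in> submatrices N M"
    using B Q by simp
  then have "all_correct D (init_state (\<lambda>_. 0)) [Upd B (-1), Qry Q]"
    using \<open>correct_ds N M D\<close> unfolding correct_ds_def by blast
  then have answer: "query_val D (A, V, Z) Q = Min (A ` Q)"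
    using s by simp
  have "A p = -1" and p: "p \<in> Q"
    using s BQ unfolding upd_step_def init_state_def by auto
  then have "Min (A ` Q) \<le> -1"
    using finite_submatrices[OF Q] by (metis Min_le finite_imageI image_eqI)
  have V: "V m = Min ((\<lambda>_. 0) ` m)" if "m \<notin> SC D B" for m
    using s that unfolding upd_step_def init_state_def by auto
  have Z: "Z m = 0" if "m \<notin> SU D B" for m
    using s that unfolding upd_step_def init_state_def by auto
  have node_value: "V n + (\<Sum>m\<in>{m\<in>nodes D. n \<subseteq> m}. Z m) = 0" if n: "n \<in> SQ D Q" for n
  proof -
    have "n \<in> nodes D" "n \<noteq> {}" "n \<subseteq> Q"
      using node_based_ds_SQ[OF nb Q n] by auto
    have "n \<notin> SC D B"
      using n no_change by blast
    then have "V n = 0"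
      using \<open>n \<noteq> {}\<close> by (simp add: V image_constant_conv)
    moreover have "m \<notin> SU D B" if "n \<subseteq> m" for m
    proof
      assume "m \<in> SU D B"
      then have "n \<subseteq> B \<inter> Q"
        using node_based_ds_SU_subset[OF nb B] \<open>n \<subseteq> m\<close> \<open>n \<subseteq> Q\<close> by blast
      then have "n = {p}"
        using BQ \<open>n \<noteq> {}\<close> by (simp add: subset_singleton_iff)
      with n no_singleton show False
        by simp
    qed
    then have "Z m = 0" if "n \<subseteq> m" for m
      using that by (simp add: Z)
    ultimately show ?thesis
      by simp
  qed
  have "SQ D Q \<noteq> {}"
    using p nb Q unfolding node_based_ds_def by auto
  then have "query_val D (A, V, Z) Q = 0"
    using node_value unfolding query_val_def by (simp add: image_constant_conv)
  with answer \<open>Min (A ` Q) \<le> -1\<close> show False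
    by simp
qed

lemma card_columns_without_singleton_query_le_SC:
  assumes nb: "node_based_ds N M D" and cor: "correct_ds N M D" and "r < N" and "0 < M"
  shows "card {c. c < M \<and> {(r, c)} \<notin> SQ D (grid_column N c)} \<le> card (SC D (grid_row M r))"
proof (rule card_le_if_disjoint_family_meets)
  have row: "grid_row M r \<in> submatrices N M"
    using \<open>r < N\<close> \<open>0 < M\<close> by (rule grid_row_in_submatrices)
  have column: "grid_column N c \<in> submatrices N M" if "c < M" for c
    using that \<open>r < N\<close> by (simp add: grid_column_in_submatrices)
  show "finite (SC D (grid_row M r))"
    using nb row by (rule node_based_ds_finite_SC)
  show "disjoint_family_on (\<lambda>c. SQ D (grid_column N c))
      {c. c < M \<and> {(r, c)} \<notin> SQ D (grid_column N c)}"
    unfolding disjoint_family_on_def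
  proof (intro ballI impI)
    fix c c' assume "c \<in> {c. c < M \<and> {(r, c)} \<notin> SQ D (grid_column N c)}"
      and "c' \<in> {c. c < M \<and> {(r, c)} \<notin> SQ D (grid_column N c)}" and "c \<noteq> c'"
    then have "c < M" "c' < M" "grid_column N c \<inter> grid_column N c' = {}"
      using disjoint_family_grid_column[of N] unfolding disjoint_family_on_def by auto
    then show "SQ D (grid_column N c) \<inter> SQ D (grid_column N c') = {}"
      using node_based_ds_SQ[OF nb column] by blast
  qed
  show "SQ D (grid_column N c) \<inter> SC D (grid_row M r) \<noteq> {}"
    if "c \<in> {c. c < M \<and> {(r, c)} \<notin> SQ D (grid_column N c)}" for c
  proof -
    from that have "c < M" and "{(r, c)} \<notin> SQ D (grid_column N c)"
      by auto
    then show ?thesis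
      using correct_ds_query_meets_update[OF nb cor row column grid_row_Int_grid_column]
        \<open>r < N\<close> by blast
  qed
qed

lemma card_rows_with_singleton_query_le_SQ:
  assumes "node_based_ds N M D" and "c < M" and "0 < N"
  shows "card {r. r < N \<and> {(r, c)} \<in> SQ D (grid_column N c)} \<le> card (SQ D (grid_column N c))"
proof (rule card_inj_on_le[where f = "\<lambda>r. {(r, c)}"])
  show "finite (SQ D (grid_column N c))"
    using assms by (simp add: node_based_ds_finite_SQ grid_column_in_submatrices)
qed (auto simp: inj_on_def)

lemma grid_le_row_changes_plus_column_queries:
  assumes "node_based_ds N M D" and "correct_ds N M D" and "0 < N" and "0 < M"
  shows "N * M \<le> (\<Sum>r<N. card (SC D (grid_row M r))) + (\<Sum>c<M. card (SQ D (grid_column N c)))"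
proof -
  let ?P = "\<lambda>r c. {(r, c)} \<in> SQ D (grid_column N c)"
  have "N * M = (\<Sum>r<N. card {c. c < M \<and> \<not> ?P r c}) + (\<Sum>c<M. card {r. r < N \<and> ?P r c})"
    by (rule card_grid_split)
  also have "\<dots> \<le> (\<Sum>r<N. card (SC D (grid_row M r))) + (\<Sum>c<M. card (SQ D (grid_column N c)))"
    using assms card_columns_without_singleton_query_le_SC card_rows_with_singleton_query_le_SQ
    by (intro add_mono sum_mono) auto
  finally show ?thesis .
qed

theorem theorem5:
  fixes N M :: nat and D :: ds
  assumes "N \<ge> 1" and "M \<ge> 1"
    and "node_based_ds N M D"
    and "correct_ds N M D"
  shows "\<exists>B\<in>submatrices N M.
           real (card (SU D B)) + real (card (SC D B)) \<ge> real N * real M / (real N + real M)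
         \<or> real (card (SQ D B)) \<ge> real N * real M / (real N + real M)"
proof -
  let ?k = "real N * real M / (real N + real M)"
  have "0 < N" "0 < M"
    using assms(1,2) by simp_all
  with assms(3,4) have
    "N * M \<le> (\<Sum>r<N. card (SC D (grid_row M r))) + (\<Sum>c<M. card (SQ D (grid_column N c)))"
    by (rule grid_le_row_changes_plus_column_queries)
  with \<open>0 < N\<close> have "(\<exists>r<N. ?k \<le> real (card (SC D (grid_row M r))))
      \<or> (\<exists>c<M. ?k \<le> real (card (SQ D (grid_column N c))))"
    by (intro exists_ge_average_of_two_sums) simp_all
  then show ?thesis
  proof (elim disjE exE conjE)
    fix r assume "r < N" and "?k \<le> real (card (SC D (grid_row M r)))"
    then show ?thesis
      using grid_row_in_submatrices[OF \<open>r < N\<close> \<open>0 < M\<close>] by force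
  next
    fix c assume "c < M" and "?k \<le> real (card (SQ D (grid_column N c)))"
    then show ?thesis
      using grid_column_in_submatrices[OF \<open>c < M\<close> \<open>0 < N\<close>] by blast
  qed
qed

end
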